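(* Let $0<a_1\le a_2$, $q\ge2$, and let $e_1,e_2,\ldots$ be non-negative integers with $a_1q^n/n\le e_n\le a_2q^n/n$ for all $n\ge1$. Define $c_{i,j}$ by the formal power series identity $$\sum_{i,j\ge0} c_{i,j}x^iy^j = \prod_{i=1}^\infty (1-x^iy)^{-e_i}.$$ Then there exist constants $C$ and $D>1$ depending only on $a_1$ and $a_2$ such that for all integers $n\ge1$ and $0\le m\le n$, $$\frac{\sum_{j=m+1}^n c_{n,j}}{\sum_{j=0}^n c_{n,j}} \le n^C D^{-m}.$$ *)

theory Defs
  imports "HOL-Analysis.Analysis" "HOL-Computational_Algebra.Formal_Power_Series"
begin

text \<open>Bivariate formal power series in x and y are modelled as \<open>real fps fps\<close>:
  the outer variable is x, the inner variable (coefficients) is y.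
  So for \<open>F :: real fps fps\<close>, the coefficient of x^i y^j is \<open>fps_nth (fps_nth F i) j\<close>.\<close>

definition fps_Y :: "real fps fps" where
  "fps_Y = fps_const fps_X"

definition gen_factor :: "(nat \<Rightarrow> nat) \<Rightarrow> nat \<Rightarrow> real fps fps" where
  "gen_factor e i = inverse ((1 - fps_X ^ i * fps_Y) ^ e i)"

definition gen_series :: "(nat \<Rightarrow> nat) \<Rightarrow> real fps fps" where
  "gen_series e = (\<Prod>k. gen_factor e (Suc k))"

definition cij :: "(nat \<Rightarrow> nat) \<Rightarrow> nat \<Rightarrow> nat \<Rightarrow> real" where
  "cij e i j = fps_nth (fps_nth (gen_series e) i) j"

end

theory Submission
  imports Defs
begin

no_notation vec_nth (infixl \<open>$\<close> 90)
notation fps_nth (infixl \<open>$\<close> 75)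

text \<open>The row sum \<open>\<Sum>\<^sub>j c\<^sub>n\<^sub>,\<^sub>j\<close> is at least \<open>c\<^sub>n\<^sub>,\<^sub>1 \<ge> e\<^sub>n \<ge> a\<^sub>1 q\<^sup>n/n\<close>,
  since the factor \<open>(1 - x\<^sup>n y)\<^sup>-\<^sup>e\<^sup>n\<close> alone contributes \<open>e\<^sub>n x\<^sup>n y\<close>.
  The tail is at most \<open>(4/3)\<^sup>-\<^sup>m \<Sum>\<^sub>j c\<^sub>n\<^sub>,\<^sub>j (4/3)\<^sup>j\<close>, and this weighted sum is at most
  \<open>q\<^sup>n\<close> times the product evaluated at \<open>x = 1/q\<close>, \<open>y = 4/3\<close> after truncation to degrees
  \<open>\<le> n\<close>. Truncated evaluation is submultiplicative on series with nonnegative coefficients,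
  and the \<open>i\<close>-th factor is bounded by \<open>(1 - (4/3) q\<^sup>-\<^sup>i)\<^sup>-\<^sup>e\<^sup>i \<le> exp (4 e\<^sub>i q\<^sup>-\<^sup>i) \<le> exp (4 a\<^sub>2/i)\<close>,
  so the weighted sum is at most \<open>q\<^sup>n exp (4 a\<^sub>2 H\<^sub>n) \<le> q\<^sup>n e\<^sup>4\<^sup>a\<^sup>2 n\<^sup>4\<^sup>a\<^sup>2\<close>.
  Dividing gives the bound with \<open>D = 4/3\<close> and a polynomial factor absorbing \<open>e\<^sup>4\<^sup>a\<^sup>2/a\<^sub>1\<close>.\<close>

lemma fps2_mult_nth:
  "((F :: 'a::comm_semiring_1 fps fps) * H) $ n $ j = (\<Sum>a=0..n. \<Sum>c=0..j. F$a$c * H$(n-a)$(j-c))"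
  by (simp add: fps_mult_nth fps_sum_nth)

definition fps_one_upto :: "nat \<Rightarrow> 'a::{zero,one} fps \<Rightarrow> bool" where
  "fps_one_upto n F \<longleftrightarrow> F$0 = 1 \<and> (\<forall>t. 0 < t \<and> t \<le> n \<longrightarrow> F$t = 0)"

lemma mult_fps_one_upto_nth:
  fixes F H :: "'a::semiring_1 fps"
  assumes "fps_one_upto n H" "t \<le> n"
  shows "(F * H) $ t = F $ t"
proof -
  have "(F * H) $ t = (\<Sum>a=0..t. if a = t then F$t else 0)"
    unfolding fps_mult_nth using assms by (intro sum.cong) (auto simp: fps_one_upto_def)
  then show ?thesis by simp
qed

lemma fps_one_upto_mult:
  fixes F H :: "'a::semiring_1 fps"
  shows "fps_one_upto n F \<Longrightarrow> fps_one_upto n H \<Longrightarrow> fps_one_upto n (F * H)"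
  using mult_fps_one_upto_nth[where F = F and H = H] unfolding fps_one_upto_def by auto

lemma fps_one_upto_one: "fps_one_upto n (1 :: 'a::semiring_1 fps)"
  by (simp add: fps_one_upto_def)

lemma fps_one_upto_power:
  fixes F :: "'a::semiring_1 fps"
  shows "fps_one_upto n F \<Longrightarrow> fps_one_upto n (F ^ k)"
  by (induction k) (simp_all add: fps_one_upto_mult fps_one_upto_one)

lemma fps_one_upto_mult_nth_Suc:
  fixes F H :: "'a::comm_semiring_1 fps"
  assumes "fps_one_upto n F" "fps_one_upto n H"
  shows "(F * H) $ Suc n = F $ Suc n + H $ Suc n"
proof -
  have "(F * H) $ Suc n = (\<Sum>a=0..Suc n. if a = 0 then H $ Suc n else if a = Suc n then F $ Suc n else 0)"
    unfolding fps_mult_nth using assms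
    by (intro sum.cong) (auto simp: fps_one_upto_def)
  also have "\<dots> = F $ Suc n + H $ Suc n"
    by (simp add: sum.atLeast0_atMost_Suc sum.atLeast_Suc_atMost add.commute)
  finally show ?thesis .
qed

lemma fps_one_upto_power_nth_Suc:
  fixes F :: "'a::comm_semiring_1 fps"
  assumes "fps_one_upto n F"
  shows "(F ^ k) $ Suc n = of_nat k * F $ Suc n"
proof (induction k)
  case (Suc k)
  have "(F ^ Suc k) $ Suc n = F $ Suc n + (F ^ k) $ Suc n"
    using assms by (simp add: fps_one_upto_mult_nth_Suc fps_one_upto_power)
  with Suc show ?case by (simp add: algebra_simps)
qed simp

lemma inverse_fps_fps_eqI:
  fixes F G :: "'a::field fps fps"
  assumes "F * G = 1" "F $ 0 = 1"
  shows "inverse F = G"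
proof -
  have "G $ 0 = 1"
    using arg_cong[OF assms(1), of "\<lambda>H. H $ 0"] assms(2) by simp
  have "inverse F = fps_right_inverse F (inverse (F $ 0))"
    by (simp only: fps_inverse_def)
  also have "inverse (F $ 0) = G $ 0"
    using assms(2) \<open>G $ 0 = 1\<close> by simp
  also have "fps_right_inverse F (G $ 0) = G"
    using fps_lr_inverse_unique_ring1(2)[OF assms(1)] assms(2) \<open>G $ 0 = 1\<close> by simp
  finally show ?thesis .
qed

definition fps2_nonneg :: "'a::linordered_semidom fps fps \<Rightarrow> bool" where
  "fps2_nonneg F \<longleftrightarrow> (\<forall>n j. 0 \<le> F$n$j)"

lemma fps2_nonneg_mult: "fps2_nonneg F \<Longrightarrow> fps2_nonneg H \<Longrightarrow> fps2_nonneg (F * H)"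
  unfolding fps2_nonneg_def fps2_mult_nth by (auto intro!: sum_nonneg)

lemma fps2_nonneg_one: "fps2_nonneg 1"
  by (simp add: fps2_nonneg_def)

lemma fps2_nonneg_power: "fps2_nonneg F \<Longrightarrow> fps2_nonneg (F ^ k)"
  by (induction k) (simp_all add: fps2_nonneg_mult fps2_nonneg_one)

lemma fps2_nonneg_mult_nth_ge:
  assumes "fps2_nonneg F" "fps2_nonneg H" "a \<le> n" "c \<le> j"
  shows "F$a$c * H$(n-a)$(j-c) \<le> (F * H)$n$j"
proof -
  have "F$a$c * H$(n-a)$(j-c) \<le> (\<Sum>c=0..j. F$a$c * H$(n-a)$(j-c))"
    using assms by (intro member_le_sum) (auto simp: fps2_nonneg_def)
  also have "\<dots> \<le> (\<Sum>a=0..n. \<Sum>c=0..j. F$a$c * H$(n-a)$(j-c))"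
    using assms by (intro member_le_sum[where f = "\<lambda>a. \<Sum>c=0..j. F$a$c * H$(n-a)$(j-c)"])
      (auto simp: fps2_nonneg_def intro!: sum_nonneg)
  finally show ?thesis by (simp add: fps2_mult_nth)
qed

definition fps2_geom :: "nat \<Rightarrow> real fps fps" where
  "fps2_geom i = Abs_fps (\<lambda>n. Abs_fps (\<lambda>j. if n = i * j then 1 else 0))"

lemma fps2_geom_nth: "fps2_geom i $ n $ j = (if n = i * j then 1 else 0)"
  by (simp add: fps2_geom_def)

lemma fps2_nonneg_geom: "fps2_nonneg (fps2_geom i)"
  by (simp add: fps2_nonneg_def fps2_geom_nth)

lemma fps_one_upto_geom:
  assumes "i \<ge> 1"
  shows "fps_one_upto (i - 1) (fps2_geom i)"
proof -
  have "fps2_geom i $ t = (if t = 0 then 1 else 0)" if "t < i" for t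
    using that assms by (auto simp: fps_eq_iff fps2_geom_nth)
  then show ?thesis using assms unfolding fps_one_upto_def by auto
qed

lemma mult_fps2_geom:
  assumes "i \<ge> 1"
  shows "(1 - fps_X ^ i * fps_Y) * fps2_geom i = 1"
proof (intro fps_ext)
  fix n j
  have "((1 - fps_X ^ i * fps_Y) * fps2_geom i) $ n $ j
      = fps2_geom i $ n $ j - (fps_X ^ i * (fps_Y * fps2_geom i)) $ n $ j"
    by (simp add: algebra_simps)
  also have "\<dots> = (1 :: real fps fps) $ n $ j"
    using assms by (cases j) (auto simp: fps_X_power_mult_nth fps_Y_def fps2_geom_nth)
  finally show "((1 - fps_X ^ i * fps_Y) * fps2_geom i) $ n $ j = (1 :: real fps fps) $ n $ j" .
qed

lemma gen_factor_eq_geom_power: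
  assumes "i \<ge> 1"
  shows "gen_factor e i = fps2_geom i ^ e i"
proof -
  have "fps_one_upto 0 (1 - fps_X ^ i * fps_Y :: real fps fps)"
    using assms by (simp add: fps_one_upto_def)
  then have "((1 - fps_X ^ i * fps_Y) ^ e i :: real fps fps) $ 0 = 1"
    using fps_one_upto_power fps_one_upto_def by blast
  moreover have "(1 - fps_X ^ i * fps_Y) ^ e i * fps2_geom i ^ e i = 1"
    by (simp add: power_mult_distrib[symmetric] mult_fps2_geom[OF assms])
  ultimately show ?thesis
    unfolding gen_factor_def by (rule inverse_fps_fps_eqI[rotated])
qed

lemma fps2_geom_power_nth_x_y:
  assumes "i \<ge> 1"
  shows "(fps2_geom i ^ k) $ i $ 1 = real k"
  using fps_one_upto_power_nth_Suc[OF fps_one_upto_geom[OF assms], of k] assms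
  by (simp add: fps2_geom_nth)

definition gen_partial :: "(nat \<Rightarrow> nat) \<Rightarrow> nat \<Rightarrow> real fps fps" where
  "gen_partial e N = (\<Prod>k<N. gen_factor e (Suc k))"

lemma fps2_nonneg_gen_factor: "fps2_nonneg (gen_factor e (Suc k))"
  by (simp add: gen_factor_eq_geom_power fps2_nonneg_power fps2_nonneg_geom)

lemma fps2_nonneg_gen_partial: "fps2_nonneg (gen_partial e N)"
  unfolding gen_partial_def
  by (induction N) (simp_all add: fps2_nonneg_one fps2_nonneg_mult fps2_nonneg_gen_factor)

lemma gen_partial_nth_stable:
  assumes "n \<le> N"
  shows "gen_partial e N $ n = gen_partial e n $ n"
  using assms
proof (induction N rule: dec_induct)
  case (step N)
  have "fps_one_upto N (gen_factor e (Suc N))"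
    using fps_one_upto_power[OF fps_one_upto_geom[of "Suc N"]] by (simp add: gen_factor_eq_geom_power)
  with step show ?case
    by (simp add: gen_partial_def mult_fps_one_upto_nth)
qed simp

lemma gen_partial_nth_0: "gen_partial e N $ 0 = 1"
  using gen_partial_nth_stable[of 0 N e] by (simp add: gen_partial_def)

text \<open>Factor \<open>k\<close> is \<open>1\<close> modulo \<open>x\<^sup>k\<^sup>+\<^sup>1\<close>, so the product converges \<open>x\<close>-adically
  and its \<open>x\<^sup>n\<close>-coefficient is already that of the \<open>n\<close>-th partial product.\<close>
lemma gen_series_nth: "gen_series e $ n = gen_partial e n $ n"
proof -
  define L where "L = Abs_fps (\<lambda>n. gen_partial e n $ n)"
  have "(\<lambda>N. \<Prod>i\<le>N. gen_factor e (Suc (i + 0))) \<longlonglongrightarrow> L"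
  proof (rule tendsto_fpsI)
    fix m
    have "(\<Prod>i\<le>N. gen_factor e (Suc (i + 0))) $ m = L $ m" if "m \<le> N" for N
      using gen_partial_nth_stable[of m "Suc N" e] that
      by (simp add: L_def gen_partial_def lessThan_Suc_atMost)
    then show "\<forall>\<^sub>F N in sequentially. (\<Prod>i\<le>N. gen_factor e (Suc (i + 0))) $ m = L $ m"
      unfolding eventually_sequentially by blast
  qed
  moreover have "L $ 0 = 1"
    by (simp add: L_def gen_partial_nth_0)
  ultimately have "(\<lambda>k. gen_factor e (Suc k)) has_prod L"
    by (auto simp: has_prod_def raw_has_prod_def)
  then have "gen_series e = L"
    unfolding gen_series_def by (rule has_prod_unique[symmetric])
  then show ?thesis by (simp add: L_def)
qed

lemma cij_eq_gen_partial: "cij e n j = gen_partial e n $ n $ j"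
  by (simp add: cij_def gen_series_nth)

lemma cij_nonneg: "0 \<le> cij e n j"
  using fps2_nonneg_gen_partial[of e n] by (simp add: cij_eq_gen_partial fps2_nonneg_def)

lemma cij_ge_exponent:
  assumes "n \<ge> 1"
  shows "real (e n) \<le> cij e n 1"
proof -
  obtain m where n: "n = Suc m" using assms by (cases n) auto
  have "gen_partial e m $ 0 $ 0 * gen_factor e n $ (n - 0) $ (1 - 0)
      \<le> (gen_partial e m * gen_factor e n) $ n $ 1"
    using n fps2_nonneg_gen_factor[of e m]
    by (intro fps2_nonneg_mult_nth_ge fps2_nonneg_gen_partial) auto
  moreover have "gen_partial e n = gen_partial e m * gen_factor e n"
    by (simp add: gen_partial_def n)
  ultimately show ?thesis
    using fps2_geom_power_nth_x_y[OF assms, of "e n"] assms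
    by (simp add: cij_eq_gen_partial gen_partial_nth_0 gen_factor_eq_geom_power)
qed

lemma sum_triangle_le_square:
  fixes \<phi> :: "nat \<Rightarrow> nat \<Rightarrow> real"
  assumes "\<And>a b. 0 \<le> \<phi> a b"
  shows "(\<Sum>n\<le>N. \<Sum>a\<le>n. \<phi> a (n - a)) \<le> (\<Sum>a\<le>N. \<Sum>b\<le>N. \<phi> a b)"
proof -
  have "(\<Sum>n\<le>N. \<Sum>a\<le>n. \<phi> a (n - a)) = (\<Sum>(a, b)\<in>{(a, b). a + b \<le> N}. \<phi> a b)"
    by (rule sum.triangle_reindex_eq[symmetric])
  also have "\<dots> \<le> (\<Sum>(a, b)\<in>{..N} \<times> {..N}. \<phi> a b)"
    using assms by (intro sum_mono2) auto
  also have "\<dots> = (\<Sum>a\<le>N. \<Sum>b\<le>N. \<phi> a b)"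
    by (simp add: sum.cartesian_product)
  finally show ?thesis .
qed

definition fps2_trunc_eval :: "real \<Rightarrow> real \<Rightarrow> nat \<Rightarrow> real fps fps \<Rightarrow> real" where
  "fps2_trunc_eval r s N F = (\<Sum>n\<le>N. \<Sum>j\<le>N. F$n$j * r^n * s^j)"

lemma fps2_trunc_eval_nonneg:
  "fps2_nonneg F \<Longrightarrow> 0 \<le> r \<Longrightarrow> 0 \<le> s \<Longrightarrow> 0 \<le> fps2_trunc_eval r s N F"
  unfolding fps2_trunc_eval_def fps2_nonneg_def by (auto intro!: sum_nonneg)

lemma fps2_trunc_eval_one: "fps2_trunc_eval r s N 1 = 1"
proof -
  have "(\<Sum>j\<le>N. (1 :: real fps fps) $ n $ j * r ^ n * s ^ j) = (if n = 0 then 1 else 0)" for n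
    by (cases "n = 0") (simp_all add: if_distrib[where f = "\<lambda>x. x * _"] cong: if_cong)
  then show ?thesis by (simp add: fps2_trunc_eval_def)
qed

text \<open>Truncating the product loses only nonnegative terms, hence submultiplicativity.\<close>
lemma fps2_trunc_eval_mult_le:
  assumes "fps2_nonneg F" "fps2_nonneg H" "0 \<le> r" "0 \<le> s"
  shows "fps2_trunc_eval r s N (F * H) \<le> fps2_trunc_eval r s N F * fps2_trunc_eval r s N H"
proof -
  define f where "f a c = F$a$c * r^a * s^c" for a c
  define h where "h a c = H$a$c * r^a * s^c" for a c
  have f0: "0 \<le> f a c" and h0: "0 \<le> h a c" for a c
    using assms by (auto simp: f_def h_def fps2_nonneg_def)
  have split_power: "x ^ n = x ^ a * x ^ (n - a)" if "a \<le> n" for x :: real and a n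
    using that by (simp add: power_add[symmetric])
  have "fps2_trunc_eval r s N (F * H) = (\<Sum>n\<le>N. \<Sum>j\<le>N. \<Sum>a\<le>n. \<Sum>c\<le>j. f a c * h (n - a) (j - c))"
    unfolding fps2_trunc_eval_def fps2_mult_nth atLeast0AtMost sum_distrib_right
    by (intro sum.cong refl)
      (auto simp: f_def h_def algebra_simps split_power[where x = r] split_power[where x = s])
  also have "\<dots> = (\<Sum>n\<le>N. \<Sum>a\<le>n. \<Sum>j\<le>N. \<Sum>c\<le>j. f a c * h (n - a) (j - c))"
    by (intro sum.cong refl sum.swap)
  also have "\<dots> \<le> (\<Sum>a\<le>N. \<Sum>b\<le>N. \<Sum>j\<le>N. \<Sum>c\<le>j. f a c * h b (j - c))"
    by (rule sum_triangle_le_square[where \<phi> = "\<lambda>a b. \<Sum>j\<le>N. \<Sum>c\<le>j. f a c * h b (j - c)"])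
      (intro sum_nonneg mult_nonneg_nonneg f0 h0)
  also have "\<dots> \<le> (\<Sum>a\<le>N. \<Sum>b\<le>N. \<Sum>c\<le>N. \<Sum>d\<le>N. f a c * h b d)"
    by (intro sum_mono sum_triangle_le_square mult_nonneg_nonneg f0 h0)
  also have "\<dots> = (\<Sum>a\<le>N. \<Sum>c\<le>N. f a c) * (\<Sum>b\<le>N. \<Sum>d\<le>N. h b d)"
    by (simp only: sum_product)
  also have "\<dots> = fps2_trunc_eval r s N F * fps2_trunc_eval r s N H"
    by (simp add: fps2_trunc_eval_def f_def h_def)
  finally show ?thesis .
qed

lemma fps2_trunc_eval_power_le:
  assumes "fps2_nonneg F" "0 \<le> r" "0 \<le> s"
  shows "fps2_trunc_eval r s N (F ^ k) \<le> fps2_trunc_eval r s N F ^ k"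
proof (induction k)
  case (Suc k)
  have "fps2_trunc_eval r s N (F ^ Suc k) \<le> fps2_trunc_eval r s N F * fps2_trunc_eval r s N (F ^ k)"
    using assms by (simp add: fps2_trunc_eval_mult_le fps2_nonneg_power)
  also have "\<dots> \<le> fps2_trunc_eval r s N F * fps2_trunc_eval r s N F ^ k"
    using Suc assms by (intro mult_left_mono fps2_trunc_eval_nonneg)
  finally show ?case by simp
qed (simp add: fps2_trunc_eval_one)

lemma fps2_trunc_eval_gen_partial_le:
  assumes "0 \<le> r" "0 \<le> s"
  shows "fps2_trunc_eval r s N (gen_partial e M) \<le> (\<Prod>k<M. fps2_trunc_eval r s N (gen_factor e (Suc k)))"
proof (induction M)
  case (Suc M)
  have "fps2_trunc_eval r s N (gen_partial e (Suc M))
      \<le> fps2_trunc_eval r s N (gen_partial e M) * fps2_trunc_eval r s N (gen_factor e (Suc M))"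
    using assms by (simp add: gen_partial_def fps2_trunc_eval_mult_le fps2_nonneg_gen_factor
        fps2_nonneg_gen_partial[unfolded gen_partial_def])
  also have "\<dots> \<le> (\<Prod>k<Suc M. fps2_trunc_eval r s N (gen_factor e (Suc k)))"
    using Suc assms by (simp add: mult_right_mono fps2_trunc_eval_nonneg fps2_nonneg_gen_factor)
  finally show ?case .
qed (simp add: gen_partial_def fps2_trunc_eval_one)

lemma sum_power_le_inverse_one_minus:
  assumes "0 \<le> (u::real)" "u < 1"
  shows "(\<Sum>j\<le>N. u ^ j) \<le> 1 / (1 - u)"
proof -
  have "(\<Sum>j\<le>N. u ^ j) = (1 - u ^ Suc N) / (1 - u)"
    using assms by (simp add: lessThan_Suc_atMost[symmetric] sum_gp_strict del: sum.lessThan_Suc)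
  also have "\<dots> \<le> 1 / (1 - u)"
    using assms by (intro divide_right_mono) auto
  finally show ?thesis .
qed

lemma fps2_trunc_eval_geom_le:
  assumes "0 \<le> r" "0 \<le> s" "r ^ i * s < 1"
  shows "fps2_trunc_eval r s N (fps2_geom i) \<le> 1 / (1 - r ^ i * s)"
proof -
  have "fps2_trunc_eval r s N (fps2_geom i) = (\<Sum>j\<le>N. \<Sum>n\<le>N. (if n = i * j then 1 else 0) * r^n * s^j)"
    unfolding fps2_trunc_eval_def fps2_geom_nth by (rule sum.swap)
  also have "\<dots> = (\<Sum>j\<le>N. if i * j \<le> N then (r ^ i * s) ^ j else 0)"
    by (intro sum.cong refl) (auto simp: if_distrib[where f = "\<lambda>x. x * _"] sum.delta
        power_mult power_mult_distrib cong: if_cong)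
  also have "\<dots> \<le> (\<Sum>j\<le>N. (r ^ i * s) ^ j)"
    using assms by (intro sum_mono) auto
  also have "\<dots> \<le> 1 / (1 - r ^ i * s)"
    using assms by (intro sum_power_le_inverse_one_minus) auto
  finally show ?thesis .
qed

lemma inverse_one_minus_le_exp: "0 \<le> (u::real) \<Longrightarrow> u \<le> 2/3 \<Longrightarrow> 1 / (1 - u) \<le> exp (3 * u)"
proof -
  assume u: "0 \<le> u" "u \<le> 2/3"
  then have "1 / (1 - u) \<le> 1 + 3 * u"
    using mult_left_mono[of "3 * u" 2 u] by (simp add: field_simps)
  also have "\<dots> \<le> exp (3 * u)"
    by (rule exp_ge_add_one_self)
  finally show ?thesis .
qed

lemma fps2_trunc_eval_gen_factor_le:
  assumes "0 \<le> r" "0 \<le> s" "r ^ i * s \<le> 2/3" "i \<ge> 1"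
  shows "fps2_trunc_eval r s N (gen_factor e i) \<le> exp (3 * real (e i) * r ^ i * s)"
proof -
  have "fps2_trunc_eval r s N (gen_factor e i) \<le> fps2_trunc_eval r s N (fps2_geom i) ^ e i"
    using assms by (simp add: gen_factor_eq_geom_power fps2_trunc_eval_power_le fps2_nonneg_geom)
  also have "\<dots> \<le> (1 / (1 - r ^ i * s)) ^ e i"
    using assms by (intro power_mono fps2_trunc_eval_geom_le fps2_trunc_eval_nonneg fps2_nonneg_geom) auto
  also have "\<dots> \<le> exp (3 * (r ^ i * s)) ^ e i"
    using assms by (intro power_mono inverse_one_minus_le_exp) auto
  also have "\<dots> = exp (3 * real (e i) * r ^ i * s)"
    by (simp add: exp_of_nat_mult[symmetric] mult_ac)
  finally show ?thesis .
qed

lemma gen_factor_trunc_eval_le: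
  assumes "q \<ge> 2" "\<forall>i\<ge>1. real (e i) \<le> a2 * q ^ i / real i"
  shows "fps2_trunc_eval (1/q) (4/3) N (gen_factor e (Suc k)) \<le> exp (4 * a2 / real (Suc k))"
proof -
  have "2 * 1 \<le> q * q ^ k"
    using assms by (intro mult_mono one_le_power) auto
  then have "2 \<le> q ^ Suc k"
    by simp
  then have "(1/q) ^ Suc k * (4/3) \<le> 2/3"
    using assms by (simp add: power_one_over field_simps)
  then have "fps2_trunc_eval (1/q) (4/3) N (gen_factor e (Suc k))
      \<le> exp (3 * real (e (Suc k)) * (1/q) ^ Suc k * (4/3))"
    using assms by (intro fps2_trunc_eval_gen_factor_le) auto
  also have "3 * real (e (Suc k)) * (1/q) ^ Suc k * (4/3) = 4 * real (e (Suc k)) / q ^ Suc k"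
    by (simp add: power_one_over)
  also have "\<dots> \<le> 4 * (a2 * q ^ Suc k / real (Suc k)) / q ^ Suc k"
    using assms by (intro divide_right_mono mult_left_mono) auto
  also have "\<dots> = 4 * a2 / real (Suc k)"
    using assms by simp
  finally show ?thesis by simp
qed

lemma exp_mult_harm_le:
  assumes "n \<ge> 1" "0 \<le> \<kappa>"
  shows "exp (\<kappa> * harm n) \<le> exp \<kappa> * real n powr \<kappa>"
proof -
  have "harm n - ln (real n) \<le> harm 1 - ln (real 1)"
    using assms by (intro euler_mascheroni_sequence_decreasing) auto
  then have "harm n \<le> 1 + ln (real n)"
    by (simp add: harm_expand)
  then have "exp (\<kappa> * harm n) \<le> exp (\<kappa> * (1 + ln (real n)))"
    using assms by (simp add: mult_left_mono)
  also have "\<dots> = exp \<kappa> * real n powr \<kappa>"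
    using assms by (simp add: powr_def distrib_left exp_add mult.commute)
  finally show ?thesis .
qed

lemma cij_weighted_sum_le:
  assumes "q \<ge> 2" "\<forall>i\<ge>1. real (e i) \<le> a2 * q ^ i / real i"
  shows "(\<Sum>j\<le>n. cij e n j * (4/3) ^ j) \<le> q ^ n * exp (4 * a2 * harm n)"
proof -
  have "(\<Sum>j\<le>n. cij e n j * (4/3) ^ j) * (1/q) ^ n = (\<Sum>j\<le>n. gen_partial e n $ n $ j * (1/q) ^ n * (4/3) ^ j)"
    by (simp add: sum_distrib_left sum_distrib_right cij_eq_gen_partial mult_ac)
  also have "\<dots> \<le> fps2_trunc_eval (1/q) (4/3) n (gen_partial e n)"
    unfolding fps2_trunc_eval_def using fps2_nonneg_gen_partial[of e n] assms
    by (intro member_le_sum[where f = "\<lambda>m. \<Sum>j\<le>n. gen_partial e n $ m $ j * (1/q) ^ m * (4/3) ^ j"]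
        sum_nonneg mult_nonneg_nonneg) (auto simp: fps2_nonneg_def)
  also have "\<dots> \<le> (\<Prod>k<n. fps2_trunc_eval (1/q) (4/3) n (gen_factor e (Suc k)))"
    using assms by (intro fps2_trunc_eval_gen_partial_le) auto
  also have "\<dots> \<le> (\<Prod>k<n. exp (4 * a2 / real (Suc k)))"
    using assms by (intro prod_mono conjI fps2_trunc_eval_nonneg fps2_nonneg_gen_factor
        gen_factor_trunc_eval_le) auto
  also have "\<dots> = exp (4 * a2 * harm n)"
    by (simp add: harm_altdef exp_sum sum_distrib_left field_simps)
  finally show ?thesis
    using assms by (simp add: power_one_over field_simps)
qed

lemma cij_row_sum_ge:
  assumes "n \<ge> 1" "a1 * q ^ n / real n \<le> real (e n)"
  shows "a1 * q ^ n / real n \<le> (\<Sum>j=0..n. cij e n j)"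
proof -
  have "real (e n) \<le> cij e n 1"
    by (rule cij_ge_exponent[OF assms(1)])
  also have "\<dots> \<le> (\<Sum>j=0..n. cij e n j)"
    using assms by (intro member_le_sum cij_nonneg) auto
  finally show ?thesis using assms by simp
qed

lemma sum_tail_le_weighted:
  fixes c :: "nat \<Rightarrow> real"
  assumes "\<And>j. 0 \<le> c j" "1 \<le> D"
  shows "(\<Sum>j=m+1..n. c j) \<le> (\<Sum>j\<le>n. c j * D ^ j) / D ^ m"
proof -
  have "(\<Sum>j=m+1..n. c j) \<le> (\<Sum>j=m+1..n. c j * D ^ j / D ^ m)"
  proof (intro sum_mono)
    fix j assume "j \<in> {m+1..n}"
    then have "1 \<le> D ^ j / D ^ m"
      using assms power_increasing[of m j D] by simp
    then show "c j \<le> c j * D ^ j / D ^ m"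
      using assms mult_left_mono[of 1 "D ^ j / D ^ m" "c j"] by simp
  qed
  also have "\<dots> \<le> (\<Sum>j\<le>n. c j * D ^ j) / D ^ m"
    unfolding sum_divide_distrib[symmetric] using assms
    by (intro divide_right_mono sum_mono2) auto
  finally show ?thesis .
qed

lemma cij_tail_ratio_le:
  assumes "0 < a1" "0 \<le> a2" "q \<ge> 2" "n \<ge> 1"
    and "\<forall>i\<ge>1. a1 * q ^ i / real i \<le> real (e i) \<and> real (e i) \<le> a2 * q ^ i / real i"
  shows "(\<Sum>j=m+1..n. cij e n j) / (\<Sum>j=0..n. cij e n j)
    \<le> exp (4 * a2) / a1 * real n powr (4 * a2 + 1) / (4/3) ^ m"
proof -
  let ?\<kappa> = "4 * a2"
  have "(\<Sum>j=m+1..n. cij e n j) \<le> (\<Sum>j\<le>n. cij e n j * (4/3) ^ j) / (4/3) ^ m"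
    by (intro sum_tail_le_weighted cij_nonneg) auto
  also have "\<dots> \<le> q ^ n * exp (?\<kappa> * harm n) / (4/3) ^ m"
    using assms by (intro divide_right_mono cij_weighted_sum_le) auto
  also have "\<dots> \<le> q ^ n * (exp ?\<kappa> * real n powr ?\<kappa>) / (4/3) ^ m"
    using assms by (intro divide_right_mono mult_left_mono exp_mult_harm_le) auto
  finally have num: "(\<Sum>j=m+1..n. cij e n j) \<le> q ^ n * (exp ?\<kappa> * real n powr ?\<kappa>) / (4/3) ^ m" .
  have den: "a1 * q ^ n / real n \<le> (\<Sum>j=0..n. cij e n j)"
    using assms by (intro cij_row_sum_ge) auto
  have "0 < q ^ n"
    using assms by (intro zero_less_power) auto
  then have "0 < a1 * q ^ n / real n"
    using assms by simp
  then have "(\<Sum>j=m+1..n. cij e n j) / (\<Sum>j=0..n. cij e n j)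
      \<le> (q ^ n * (exp ?\<kappa> * real n powr ?\<kappa>) / (4/3) ^ m) / (a1 * q ^ n / real n)"
    using num den \<open>0 < q ^ n\<close> by (intro frac_le sum_nonneg cij_nonneg) auto
  also have "\<dots> = exp ?\<kappa> / a1 * (real n powr ?\<kappa> * real n) / (4/3) ^ m"
    using assms by (simp add: field_simps)
  also have "real n powr ?\<kappa> * real n = real n powr (?\<kappa> + 1)"
    using assms by (simp add: powr_add)
  finally show ?thesis .
qed

lemma le_powr_max_log:
  fixes M x :: real
  assumes "2 \<le> x"
  shows "M \<le> x powr max 0 (log 2 M)"
proof (cases "M \<le> 1")
  case True
  then show ?thesis
    using assms ge_one_powr_ge_zero[of x "max 0 (log 2 M)"] by simp
next
  case False
  then have "M = 2 powr log 2 M" by simp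
  also have "\<dots> \<le> x powr log 2 M"
    using False assms by (intro powr_mono2) auto
  finally show ?thesis
    using False by simp
qed

theorem proposition2p3:
  fixes a1 a2 :: real
  assumes "0 < a1" and "a1 \<le> a2"
  shows "\<exists>C D :: real. D > 1 \<and>
    (\<forall>(q::real) (e::nat \<Rightarrow> nat).
       q \<ge> 2 \<longrightarrow>
       (\<forall>n\<ge>1. a1 * q ^ n / real n \<le> real (e n) \<and> real (e n) \<le> a2 * q ^ n / real n) \<longrightarrow>
       (\<forall>n m. 1 \<le> n \<longrightarrow> m \<le> n \<longrightarrow>
          (\<Sum>j=m+1..n. cij e n j) / (\<Sum>j=0..n. cij e n j)
            \<le> real n powr C * D powr (- real m)))"
proof -
  define M where "M = exp (4 * a2) / a1"
  define C where "C = max 0 (log 2 M) + (4 * a2 + 1)"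
  have tail_ratio_le: "(\<Sum>j=m+1..n. cij e n j) / (\<Sum>j=0..n. cij e n j) \<le> real n powr C / (4/3) ^ m"
    if "q \<ge> 2" "m \<le> n" "1 \<le> n"
      "\<forall>n\<ge>1. a1 * q ^ n / real n \<le> real (e n) \<and> real (e n) \<le> a2 * q ^ n / real n"
    for q e n m
  proof (cases "n = 1")
    case True
    \<comment> \<open>Here \<open>n\<^sup>C\<close> cannot absorb \<open>M\<close>, but the ratio is at most \<open>1\<close>.\<close>
    have "(\<Sum>j=m+1..n. cij e n j) \<le> (\<Sum>j=0..n. cij e n j)"
      by (intro sum_mono2 cij_nonneg) auto
    moreover have "0 \<le> (\<Sum>j=m+1..n. cij e n j)"
      by (intro sum_nonneg cij_nonneg)
    ultimately show ?thesis
      using True that by (cases m) (auto simp: divide_le_eq_1)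
  next
    case False
    have "(\<Sum>j=m+1..n. cij e n j) / (\<Sum>j=0..n. cij e n j) \<le> M * real n powr (4 * a2 + 1) / (4/3) ^ m"
      unfolding M_def using that assms by (intro cij_tail_ratio_le) auto
    also have "\<dots> \<le> real n powr max 0 (log 2 M) * real n powr (4 * a2 + 1) / (4/3) ^ m"
      using False that by (intro divide_right_mono mult_right_mono le_powr_max_log) auto
    finally show ?thesis
      by (simp add: C_def powr_add)
  qed
  have "(4/3) powr (- real m) = 1 / (4/3) ^ m" for m :: nat
    by (simp add: powr_minus_divide powr_realpow)
  then show ?thesis
    using tail_ratio_le by (intro exI[of _ C] exI[of _ "4/3"]) auto
qed

end
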